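(* Let $f$ be a positive even integer and let $G(\mathcal V,\mathcal E)$ be a 2-clique network (for this $f$). Then for every partition $A,B,F$ of $\mathcal V$ with $A,B$ non-empty and $|F|\le f$, either $A \Rightarrow_{\mathcal V - F} B$ or $B \Rightarrow_{\mathcal V - F} A$.
   Context: A simple directed graph $G(\mathcal V,\mathcal E)$ with $n=6f+2$ nodes, $f$ a positive even integer, is a 2-clique network if: $\mathcal V$ is the disjoint union of $K_1=\{u_1,\dots,u_{3f+1}\}$ and $K_2=\{w_1,\dots,w_{3f+1}\}$; $(u_i,u_j)\in\mathcal E$ and $(w_i,w_j)\in\mathcal E$ for all $1\le i,j\le 3f+1$, $i\ne j$; $(u_i,w_i)\in\mathcal E$ for $1\le i\le \frac{3f}{2}$ and for $i=3f+1$; and $(w_i,u_i)\in\mathcal E$ for $\frac{3f}{2}+1\le i\le 3f$ and for $i=3f+1$. An $(X,y)$-path is a directed path from some node of $X$ to the node $y\notin X$; it excludes $F$ if it contains no node of $F$; $(X,y)$-paths are disjoint if they pairwise share only $y$. For pairwise disjoint $X,Y,F\subseteq\mathcal V$ with $|F|\le f$, $X \Rightarrow_{\mathcal V - F} Y$ means: $Y=\emptyset$, or every $y\in Y$ has at least $f+1$ pairwise disjoint $(X,y)$-paths excluding $F$. *)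

theory Defs
  imports Main
begin

definition two_clique_network ::
  "nat \<Rightarrow> 'a set \<Rightarrow> ('a \<times> 'a) set \<Rightarrow> (nat \<Rightarrow> 'a) \<Rightarrow> (nat \<Rightarrow> 'a) \<Rightarrow> bool" where
  "two_clique_network f V E u w \<longleftrightarrow>
     inj_on u {1..3*f+1} \<and> inj_on w {1..3*f+1} \<and>
     u ` {1..3*f+1} \<inter> w ` {1..3*f+1} = {} \<and>
     V = u ` {1..3*f+1} \<union> w ` {1..3*f+1} \<and>
     E = {(u i, u j) | i j. i \<in> {1..3*f+1} \<and> j \<in> {1..3*f+1} \<and> i \<noteq> j}
       \<union> {(w i, w j) | i j. i \<in> {1..3*f+1} \<and> j \<in> {1..3*f+1} \<and> i \<noteq> j}
       \<union> {(u i, w i) | i. (1 \<le> i \<and> i \<le> 3*f div 2) \<or> i = 3*f+1}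
       \<union> {(w i, u i) | i. (3*f div 2 + 1 \<le> i \<and> i \<le> 3*f) \<or> i = 3*f+1}"

definition dpath :: "('a \<times> 'a) set \<Rightarrow> 'a list \<Rightarrow> bool" where
  "dpath E p \<longleftrightarrow> p \<noteq> [] \<and> distinct p \<and> (\<forall>i. Suc i < length p \<longrightarrow> (p ! i, p ! Suc i) \<in> E)"

definition XY_path :: "('a \<times> 'a) set \<Rightarrow> 'a set \<Rightarrow> 'a \<Rightarrow> 'a list \<Rightarrow> bool" where
  "XY_path E X y p \<longleftrightarrow> y \<notin> X \<and> dpath E p \<and> hd p \<in> X \<and> last p = y"

text \<open>X \<Rightarrow>_{V-F} Y: Y empty, or every y in Y has at least f+1 pairwise disjoint
  (X,y)-paths excluding F (disjoint = pairwise sharing only y).\<close>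
definition reaches ::
  "nat \<Rightarrow> ('a \<times> 'a) set \<Rightarrow> 'a set \<Rightarrow> 'a set \<Rightarrow> 'a set \<Rightarrow> bool" where
  "reaches f E F X Y \<longleftrightarrow> Y = {} \<or>
     (\<forall>y\<in>Y. \<exists>P. finite P \<and> card P \<ge> f + 1 \<and>
        (\<forall>p\<in>P. XY_path E X y p \<and> set p \<inter> F = {}) \<and>
        (\<forall>p\<in>P. \<forall>q\<in>P. p \<noteq> q \<longrightarrow> set p \<inter> set q = {y}))"

end

theory Submission imports Defs begin

text \<open>Each clique has 3f + 1 nodes, at most f of them faulty, so one of A, B owns f + 1 of its
  nodes, and from f + 1 nodes of a clique every other node of that clique is reached along f + 1
  disjoint one-edge paths. Of the 3f + 1 cross pairs u i, w i at least 2f + 1 avoid F, so f + 1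
  fault-free cross edges point the same way, say from clique K to clique L. Routing f + 1 nodes
  of X inside K onto the tails of these disjoint edges and closing each path inside L reaches
  every node of L. Hence a side owning f + 1 nodes of both cliques reaches everything, and
  otherwise the side owning f + 1 nodes of the tail clique of the surviving cross edges does.\<close>

lemma dpath_singleton [simp]: "dpath E [x]"
  by (simp add: dpath_def)

lemma dpath_Cons_Cons [simp]:
  "dpath E (x # y # ys) \<longleftrightarrow> (x, y) \<in> E \<and> x \<notin> set (y # ys) \<and> dpath E (y # ys)"
  unfolding dpath_def by (auto simp: All_less_Suc2 nth_Cons' split: if_splits)

lemma dpath_append:
  assumes "xs \<noteq> []" "ys \<noteq> []"
  shows "dpath E (xs @ ys) \<longleftrightarrow>
    dpath E xs \<and> dpath E ys \<and> set xs \<inter> set ys = {} \<and> (last xs, hd ys) \<in> E"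
  using assms
proof (induction xs)
  case (Cons x xs)
  obtain y ys' where ys: "ys = y # ys'" using Cons.prems by (cases ys) auto
  show ?case
  proof (cases xs)
    case Nil
    then show ?thesis by (simp add: ys) (auto simp: dpath_def)
  next
    case (Cons x' xs')
    then show ?thesis using Cons.IH[OF _ Cons.prems(2)] by auto
  qed
qed simp

definition reaches_node :: "nat \<Rightarrow> ('a \<times> 'a) set \<Rightarrow> 'a set \<Rightarrow> 'a set \<Rightarrow> 'a \<Rightarrow> bool" where
  "reaches_node f E F X y \<longleftrightarrow> (\<exists>P. finite P \<and> card P \<ge> f + 1 \<and>
     (\<forall>p\<in>P. XY_path E X y p \<and> set p \<inter> F = {}) \<and>
     (\<forall>p\<in>P. \<forall>q\<in>P. p \<noteq> q \<longrightarrow> set p \<inter> set q = {y}))"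

lemma reaches_iff_reaches_node: "reaches f E F X Y \<longleftrightarrow> (\<forall>y\<in>Y. reaches_node f E F X y)"
  unfolding reaches_def reaches_node_def by blast

text \<open>Distinct indices give distinct paths, since an (X,y)-path is never the one-node path [y].\<close>
lemma reaches_nodeI:
  assumes "finite D" "card D \<ge> f + 1"
    and paths: "\<And>i. i \<in> D \<Longrightarrow> XY_path E X y (p i) \<and> set (p i) \<inter> F = {}"
    and disjoint: "\<And>i j. i \<in> D \<Longrightarrow> j \<in> D \<Longrightarrow> i \<noteq> j \<Longrightarrow> set (p i) \<inter> set (p j) = {y}"
  shows "reaches_node f E F X y"
proof -
  have "inj_on p D"
  proof (rule inj_onI, rule ccontr)
    fix i j assume ij: "i \<in> D" "j \<in> D" "p i = p j" "i \<noteq> j"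
    then have "set (p i) = {y}" using disjoint by fastforce
    moreover have "hd (p i) \<in> set (p i)" "hd (p i) \<in> X" "y \<notin> X"
      using paths[OF ij(1)] by (auto simp: XY_path_def dpath_def)
    ultimately show False by auto
  qed
  moreover have "set a \<inter> set b = {y}" if "a \<in> p ` D" "b \<in> p ` D" "a \<noteq> b" for a b
    using that disjoint by blast
  ultimately show ?thesis unfolding reaches_node_def using assms(1,2) paths
    by (intro exI[of _ "p ` D"]) (auto simp: card_image)
qed

definition clique :: "('a \<times> 'a) set \<Rightarrow> 'a set \<Rightarrow> bool" where
  "clique E K \<longleftrightarrow> (\<forall>x\<in>K. \<forall>z\<in>K. x \<noteq> z \<longrightarrow> (x, z) \<in> E)"

lemma reaches_node_in_clique:
  assumes "clique E K" "finite K" "X \<inter> F = {}" "card (X \<inter> K) \<ge> f + 1"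
    and "y \<in> K - X - F"
  shows "reaches_node f E F X y"
  by (rule reaches_nodeI[of "X \<inter> K" f _ _ _ "\<lambda>x. [x, y]"])
     (use assms in \<open>auto simp: XY_path_def clique_def\<close>)

lemma clique_linkage:
  assumes "clique E K" "finite K" "T \<subseteq> K" "card T \<le> card (X \<inter> K)"
  obtains P where
    "\<And>t. t \<in> T \<Longrightarrow> dpath E (P t) \<and> hd (P t) \<in> X \<and> last (P t) = t \<and> set (P t) \<subseteq> K \<inter> (X \<union> T)"
    "\<And>s t. s \<in> T \<Longrightarrow> t \<in> T \<Longrightarrow> s \<noteq> t \<Longrightarrow> set (P s) \<inter> set (P t) = {}"
proof -
  have fin: "finite T" "finite (X \<inter> K)" using assms(2,3) finite_subset by auto
  have "card T = card (T \<inter> X) + card (T - X) \<and> card (X \<inter> K) = card (T \<inter> X) + card (X \<inter> K - T)"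
  proof -
    have "X \<inter> K \<inter> T = T \<inter> X" using assms(3) by blast
    then show ?thesis using fin card_Int_Diff[of T X] card_Int_Diff[of "X \<inter> K" T] by simp
  qed
  then have "card (T - X) \<le> card (X \<inter> K - T)" using assms(4) by linarith
  then obtain g where g: "g ` (T - X) \<subseteq> X \<inter> K - T" "inj_on g (T - X)"
    using card_le_inj fin by (metis finite_Diff)
  \<comment> \<open>each target outside X is entered from its own spare node of X \<inter> K\<close>
  define P where "P t = (if t \<in> X then [t] else [g t, t])" for t
  show ?thesis
  proof
    fix t assume t: "t \<in> T"
    have "g t \<in> X \<inter> K - T" if "t \<notin> X" using g(1) t that by blast
    then show "dpath E (P t) \<and> hd (P t) \<in> X \<and> last (P t) = t \<and> set (P t) \<subseteq> K \<inter> (X \<union> T)"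
      using t assms(1,3) unfolding clique_def by (auto simp: P_def) (metis Diff_iff IntD2 in_mono)
  next
    fix s t assume "s \<in> T" "t \<in> T" "s \<noteq> t"
    then show "set (P s) \<inter> set (P t) = {}"
      using g by (auto simp: P_def inj_on_def)
  qed
qed

definition fault_free_matching ::
  "('a \<times> 'a) set \<Rightarrow> 'a set \<Rightarrow> 'a set \<Rightarrow> 'a set \<Rightarrow> 'i set \<Rightarrow> ('i \<Rightarrow> 'a) \<Rightarrow> ('i \<Rightarrow> 'a) \<Rightarrow> bool" where
  "fault_free_matching E F K L D p q \<longleftrightarrow> finite D \<and> inj_on p D \<and> inj_on q D \<and>
     (\<forall>i\<in>D. p i \<in> K - F \<and> q i \<in> L - F \<and> (p i, q i) \<in> E)"

lemma reaches_node_across_matching: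
  assumes K: "clique E K" "finite K" and L: "clique E L" and KL: "K \<inter> L = {}"
    and M: "fault_free_matching E F K L D p q" "card D \<ge> f + 1"
    and X: "X \<inter> F = {}" "card (X \<inter> K) \<ge> f + 1"
    and y: "y \<in> L - X - F"
  shows "reaches_node f E F X y"
proof -
  obtain D' where D': "D' \<subseteq> D" "card D' = f + 1"
    using obtain_subset_with_card_n[OF M(2)] by metis
  have M': "finite D'" "inj_on p D'" "inj_on q D'"
    "\<And>i. i \<in> D' \<Longrightarrow> p i \<in> K - F \<and> q i \<in> L - F \<and> (p i, q i) \<in> E"
    using M(1) D'(1) by (auto simp: fault_free_matching_def intro: finite_subset inj_on_subset)
  have "card (p ` D') \<le> card (X \<inter> K)" using D'(2) M'(2) X(2) by (simp add: card_image)
  then obtain P where P: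
    "\<And>t. t \<in> p ` D' \<Longrightarrow> dpath E (P t) \<and> hd (P t) \<in> X \<and> last (P t) = t \<and> set (P t) \<subseteq> K \<inter> (X \<union> p ` D')"
    "\<And>s t. s \<in> p ` D' \<Longrightarrow> t \<in> p ` D' \<Longrightarrow> s \<noteq> t \<Longrightarrow> set (P s) \<inter> set (P t) = {}"
    using clique_linkage[OF K, of "p ` D'" X] M'(4) by blast
  \<comment> \<open>\<open>remdups\<close> drops the final step when the matching edge already ends in y\<close>
  define path where "path i = P (p i) @ remdups [q i, y]" for i
  show ?thesis
  proof (rule reaches_nodeI[of D' f _ _ _ path])
    fix i assume i: "i \<in> D'"
    have tail: "dpath E (remdups [q i, y]) \<and> set (remdups [q i, y]) \<subseteq> L - F \<and> hd (remdups [q i, y]) = q i"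
      using M'(4)[OF i] L y by (auto simp: clique_def)
    have "P (p i) \<noteq> []" using P(1)[of "p i"] i by (auto simp: dpath_def)
    moreover have "set (P (p i)) \<subseteq> K - F" using P(1)[of "p i"] i M'(4) X(1) by blast
    ultimately show "XY_path E X y (path i) \<and> set (path i) \<inter> F = {}"
      using P(1)[of "p i"] i tail KL M'(4)[OF i] y
      by (auto simp: path_def XY_path_def dpath_append hd_append)
  next
    fix i j assume ij: "i \<in> D'" "j \<in> D'" "i \<noteq> j"
    then have "set (P (p i)) \<inter> set (P (p j)) = {}" "q i \<noteq> q j"
      using P(2) M'(2,3) by (auto simp: inj_on_def)
    moreover have "set (P (p i)) \<subseteq> K" "set (P (p j)) \<subseteq> K" using P(1) ij by blast+
    ultimately show "set (path i) \<inter> set (path j) = {y}"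
      using M'(4) ij KL y by (auto simp: path_def)
  qed (use D' M' in auto)
qed

lemma reaches_node_in_clique_or_across:
  assumes "clique E K" "finite K" "clique E L" "finite L" "K \<inter> L = {}"
    and "fault_free_matching E F K L D p q" "X \<inter> F = {}" "y \<in> L - X - F"
    and "card (X \<inter> L) \<ge> f + 1 \<or> card (X \<inter> K) \<ge> f + 1 \<and> card D \<ge> f + 1"
  shows "reaches_node f E F X y"
  using assms reaches_node_in_clique[of E L X F f y] reaches_node_across_matching[of E K L F D p q f X y]
  by blast

lemma pigeonhole_Un:
  assumes "finite A" "finite B" "S \<subseteq> A \<union> B" "card S \<ge> 2 * f + 1"
  shows "card A \<ge> f + 1 \<or> card B \<ge> f + 1"
proof -
  have "card S \<le> card A + card B"
    using card_mono[OF _ assms(3)] card_Un_le[of A B] assms(1,2) by fastforce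
  then show ?thesis using assms(4) by linarith
qed

definition uw_links :: "nat \<Rightarrow> 'a set \<Rightarrow> (nat \<Rightarrow> 'a) \<Rightarrow> (nat \<Rightarrow> 'a) \<Rightarrow> nat set" where
  "uw_links f F u w = {i. (1 \<le> i \<and> i \<le> 3*f div 2 \<or> i = 3*f+1) \<and> u i \<notin> F \<and> w i \<notin> F}"

definition wu_links :: "nat \<Rightarrow> 'a set \<Rightarrow> (nat \<Rightarrow> 'a) \<Rightarrow> (nat \<Rightarrow> 'a) \<Rightarrow> nat set" where
  "wu_links f F u w = {i. (3*f div 2 + 1 \<le> i \<and> i \<le> 3*f \<or> i = 3*f+1) \<and> u i \<notin> F \<and> w i \<notin> F}"

lemma two_clique_network_cliques:
  assumes "two_clique_network f V E u w"
  shows "clique E (u ` {1..3*f+1})" "clique E (w ` {1..3*f+1})"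
  using assms unfolding two_clique_network_def clique_def by blast+

lemma two_clique_network_partition:
  assumes "two_clique_network f V E u w"
  shows "V = u ` {1..3*f+1} \<union> w ` {1..3*f+1}" "u ` {1..3*f+1} \<inter> w ` {1..3*f+1} = {}"
    and "card (u ` {1..3*f+1}) = 3*f+1" "card (w ` {1..3*f+1}) = 3*f+1"
  using assms unfolding two_clique_network_def by (simp_all add: card_image)

lemma two_clique_network_matchings:
  assumes "two_clique_network f V E u w"
  shows "fault_free_matching E F (u ` {1..3*f+1}) (w ` {1..3*f+1}) (uw_links f F u w) u w"
    and "fault_free_matching E F (w ` {1..3*f+1}) (u ` {1..3*f+1}) (wu_links f F u w) w u"
proof -
  have "uw_links f F u w \<subseteq> {1..3*f+1}" "wu_links f F u w \<subseteq> {1..3*f+1}"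
    by (auto simp: uw_links_def wu_links_def)
  then show "fault_free_matching E F (u ` {1..3*f+1}) (w ` {1..3*f+1}) (uw_links f F u w) u w"
    and "fault_free_matching E F (w ` {1..3*f+1}) (u ` {1..3*f+1}) (wu_links f F u w) w u"
    using assms unfolding two_clique_network_def fault_free_matching_def
    by (auto intro: finite_subset inj_on_subset simp: uw_links_def wu_links_def)
qed

text \<open>At most f of the 3f + 1 pairs u i, w i meet F, and every other pair is joined by a
  cross edge in at least one direction.\<close>
lemma two_clique_network_many_links:
  assumes net: "two_clique_network f V E u w" and F: "finite F" "card F \<le> f"
  shows "card (uw_links f F u w) \<ge> f + 1 \<or> card (wu_links f F u w) \<ge> f + 1"
proof (rule pigeonhole_Un)
  let ?I = "{1..3*f+1}"
  define G where "G = {i \<in> ?I. u i \<notin> F \<and> w i \<notin> F}"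
  define Fu where "Fu = {i \<in> ?I. u i \<in> F}"
  define Fw where "Fw = {i \<in> ?I. w i \<in> F}"
  show "finite (uw_links f F u w)" "finite (wu_links f F u w)" "G \<subseteq> uw_links f F u w \<union> wu_links f F u w"
    by (auto simp: G_def uw_links_def wu_links_def intro: finite_subset[of _ ?I])
  have fin: "finite Fu" "finite Fw" by (simp_all add: Fu_def Fw_def)
  have inj: "inj_on u Fu" "inj_on w Fw"
    using net unfolding two_clique_network_def Fu_def Fw_def by (auto intro: inj_on_subset)
  have "u ` Fu \<union> w ` Fw \<subseteq> F" "u ` Fu \<inter> w ` Fw = {}"
    using net unfolding two_clique_network_def Fu_def Fw_def by blast+
  then have "card (u ` Fu) + card (w ` Fw) \<le> card F"
    using F(1) fin card_mono[of F "u ` Fu \<union> w ` Fw"] card_Un_disjoint[of "u ` Fu" "w ` Fw"] by simp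
  then have "card Fu + card Fw \<le> f" using F(2) inj by (simp add: card_image)
  moreover have "card ?I \<le> card G + card Fu + card Fw"
  proof -
    have "?I \<subseteq> G \<union> Fu \<union> Fw" by (auto simp: G_def Fu_def Fw_def)
    then have "card ?I \<le> card (G \<union> Fu \<union> Fw)" by (intro card_mono) (simp_all add: G_def fin)
    also have "\<dots> \<le> card G + card Fu + card Fw"
      using card_Un_le[of "G \<union> Fu" Fw] card_Un_le[of G Fu] by linarith
    finally show ?thesis .
  qed
  ultimately show "card G \<ge> 2 * f + 1" by simp
qed

lemma two_clique_network_reaches:
  assumes net: "two_clique_network f V E u w" and "X \<inter> F = {}" "Y \<subseteq> V - X - F"
    and "card (X \<inter> u ` {1..3*f+1}) \<ge> f + 1 \<or>
         card (X \<inter> w ` {1..3*f+1}) \<ge> f + 1 \<and> card (wu_links f F u w) \<ge> f + 1"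
    and "card (X \<inter> w ` {1..3*f+1}) \<ge> f + 1 \<or>
         card (X \<inter> u ` {1..3*f+1}) \<ge> f + 1 \<and> card (uw_links f F u w) \<ge> f + 1"
  shows "reaches f E F X Y"
  unfolding reaches_iff_reaches_node
proof
  fix y assume "y \<in> Y"
  then consider "y \<in> u ` {1..3*f+1} - X - F" | "y \<in> w ` {1..3*f+1} - X - F"
    using assms(3) two_clique_network_partition(1)[OF net] by blast
  then show "reaches_node f E F X y"
    using reaches_node_in_clique_or_across assms two_clique_network_cliques[OF net]
      two_clique_network_matchings[OF net] two_clique_network_partition(2)[OF net]
    by (metis finite_atLeastAtMost finite_imageI inf_commute)
qed

theorem lemma9:
  fixes f :: nat and V :: "'a set" and E :: "('a \<times> 'a) set" and u w :: "nat \<Rightarrow> 'a"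
    and A B F :: "'a set"
  assumes "f > 0" and "even f"
    and "two_clique_network f V E u w"
    and "A \<union> B \<union> F = V" and "A \<inter> B = {}" and "A \<inter> F = {}" and "B \<inter> F = {}"
    and "A \<noteq> {}" and "B \<noteq> {}" and "card F \<le> f"
  shows "reaches f E F A B \<or> reaches f E F B A"
proof -
  note net = assms(3)
  have "finite V" using two_clique_network_partition(1)[OF net] by simp
  then have finF: "finite F" using assms(4) by (auto intro: finite_subset)
  have majority: "card (A \<inter> K) \<ge> f + 1 \<or> card (B \<inter> K) \<ge> f + 1"
    if "K \<subseteq> V" "card K = 3*f+1" for K
  proof (rule pigeonhole_Un)
    show "finite (A \<inter> K)" "finite (B \<inter> K)" "K - F \<subseteq> A \<inter> K \<union> B \<inter> K"
      using that assms(4) card_gt_0_iff[of K] by auto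
    show "card (K - F) \<ge> 2 * f + 1"
      using diff_card_le_card_Diff[OF finF, of K] that(2) assms(10) by linarith
  qed
  have "card (A \<inter> u ` {1..3*f+1}) \<ge> f + 1 \<or> card (B \<inter> u ` {1..3*f+1}) \<ge> f + 1"
    "card (A \<inter> w ` {1..3*f+1}) \<ge> f + 1 \<or> card (B \<inter> w ` {1..3*f+1}) \<ge> f + 1"
    using majority two_clique_network_partition[OF net] by blast+
  moreover have "card (uw_links f F u w) \<ge> f + 1 \<or> card (wu_links f F u w) \<ge> f + 1"
    using two_clique_network_many_links[OF net finF assms(10)] .
  moreover have "B \<subseteq> V - A - F" "A \<subseteq> V - B - F" using assms(4-7) by auto
  ultimately show ?thesis
    using two_clique_network_reaches[OF net assms(6)] two_clique_network_reaches[OF net assms(7)]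
    by blast
qed

end
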